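(* Let $N\ge2$, let $\mathbf{A}=[1\ 1\ \cdots\ 1]\in\mathbb{R}^{1\times N}$, let $1\le r<N$, let $i_1,\dots,i_r$ be distinct indices in $\{1,\dots,N\}$, and let $\mathbf{B}=[\vec e_{i_1},\dots,\vec e_{i_r}]^{\mathsf T}\in\mathbb{R}^{r\times N}$, where $\vec e_i$ are the standard basis vectors of $\mathbb{R}^N$. Then the principal angles $\theta_1\le\cdots\le\theta_{N-r}$ between the subspaces $\mathcal N(\mathbf{A})$ and $\mathcal N(\mathbf{B})$ satisfy $$\cos\theta_1=\cdots=\cos\theta_{N-r-1}=1\quad\text{and}\quad \cos\theta_{N-r}=\sqrt{\tfrac{r}{N}}.$$
   Context: $\mathcal N(\cdot)$ denotes the null space. For subspaces $\mathcal U,\mathcal V\subseteq\mathbb{R}^N$ with $\dim\mathcal U=p\le\dim\mathcal V$ (here $\mathcal U=\mathcal N(\mathbf B)$, of dimension $N-r$, and $\mathcal V=\mathcal N(\mathbf A)$, of dimension $N-1$), the principal angles $\theta_k\in[0,\pi/2]$, $k=1,\dots,p$, are defined recursively by $\cos\theta_k=\vec u_k^{\mathsf T}\vec v_k=\max_{\vec u\in\mathcal U}\max_{\vec v\in\mathcal V}\vec u^{\mathsf T}\vec v$ subject to $\|\vec u\|_2=\|\vec v\|_2=1$, $\vec u_j^{\mathsf T}\vec u=0$, $\vec v_j^{\mathsf T}\vec v=0$ for $j=1,\dots,k-1$. *)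

theory Defs
  imports "HOL-Analysis.Analysis"
begin

definition null_space_mat :: "real^'n^'m \<Rightarrow> (real^'n) set" where
  "null_space_mat M = {x. M *v x = 0}"

(* Indices are 0-based: the paper's theta_{k+1} corresponds to index k. *)
definition principal_vectors ::
  "('a::real_inner) set \<Rightarrow> 'a set \<Rightarrow> nat \<Rightarrow> (nat \<Rightarrow> 'a) \<Rightarrow> (nat \<Rightarrow> 'a) \<Rightarrow> bool" where
  "principal_vectors U V p u v \<longleftrightarrow>
     (\<forall>k<p. u k \<in> U \<and> v k \<in> V \<and> norm (u k) = 1 \<and> norm (v k) = 1 \<and>
        (\<forall>j<k. u j \<bullet> u k = 0 \<and> v j \<bullet> v k = 0) \<and>
        (\<forall>x\<in>U. \<forall>y\<in>V. norm x = 1 \<and> norm y = 1 \<and> (\<forall>j<k. u j \<bullet> x = 0 \<and> v j \<bullet> y = 0)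
            \<longrightarrow> x \<bullet> y \<le> u k \<bullet> v k))"

definition principal_angle :: "(nat \<Rightarrow> 'a::real_inner) \<Rightarrow> (nat \<Rightarrow> 'a) \<Rightarrow> nat \<Rightarrow> real" where
  "principal_angle u v k = arccos (u k \<bullet> v k)"

end

theory Submission
  imports Defs
begin

(* N(B) is the coordinate subspace U of vectors supported on the complement T of the selected
   indices, and N(A) is the hyperplane V orthogonal to the all-ones vector; U \<inter> V has dimension
   |T| - 1. As long as k < dim (U \<inter> V), a unit vector of U \<inter> V orthogonal to the earlier ones is
   admissible on both sides, so maximality forces u k = v k and cos theta_k = 1; these u k then form
   an orthonormal basis of U \<inter> V. Hence the last u is a unit vector of U orthogonal to U \<inter> V, i.e.
   a multiple of the indicator of T, and the best unit partner in V is its normalised component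
   orthogonal to the all-ones vector, of length sqrt (1 - |T|/N) = sqrt (r/N). Principal vectors
   exist by compactness of the unit spheres. *)

section \<open>Principal vectors of subspaces of a Euclidean space\<close>


definition admissible :: "'a::real_inner set \<Rightarrow> (nat \<Rightarrow> 'a) \<Rightarrow> nat \<Rightarrow> 'a set" where
  "admissible U u k = {x \<in> U. norm x = 1 \<and> (\<forall>j<k. u j \<bullet> x = 0)}"

lemma principal_vectors_iff_admissible:
  "principal_vectors U V p u v \<longleftrightarrow>
     (\<forall>k<p. u k \<in> admissible U u k \<and> v k \<in> admissible V v k \<and>
        (\<forall>x\<in>admissible U u k. \<forall>y\<in>admissible V v k. x \<bullet> y \<le> u k \<bullet> v k))"
  unfolding principal_vectors_def admissible_def by blast

lemma principal_vectorsD: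
  assumes "principal_vectors U V p u v" "k < p"
  shows "u k \<in> admissible U u k" "v k \<in> admissible V v k"
    and "\<And>x y. x \<in> admissible U u k \<Longrightarrow> y \<in> admissible V v k \<Longrightarrow> x \<bullet> y \<le> u k \<bullet> v k"
  using assms unfolding principal_vectors_iff_admissible by blast+

lemma admissible_fun_upd: "k \<le> p \<Longrightarrow> admissible U (u(p := x)) k = admissible U u k"
  unfolding admissible_def by auto

lemma principal_vectors_Suc:
  assumes "principal_vectors U V p u v"
    and "x \<in> admissible U u p" "y \<in> admissible V v p"
    and "\<forall>x'\<in>admissible U u p. \<forall>y'\<in>admissible V v p. x' \<bullet> y' \<le> x \<bullet> y"
  shows "principal_vectors U V (Suc p) (u(p := x)) (v(p := y))"
  using assms unfolding principal_vectors_iff_admissible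
  by (auto simp: admissible_fun_upd less_Suc_eq)

lemma compact_admissible:
  fixes U :: "'a::euclidean_space set"
  assumes "subspace U"
  shows "compact (admissible U u k)"
proof -
  have "subspace {x. \<forall>j<k. u j \<bullet> x = 0}"
    unfolding subspace_def by (simp add: inner_add_right)
  then have "closed (U \<inter> {x. \<forall>j<k. u j \<bullet> x = 0})"
    using assms by (intro closed_subspace subspace_inter)
  moreover have "admissible U u k = sphere 0 1 \<inter> (U \<inter> {x. \<forall>j<k. u j \<bullet> x = 0})"
    unfolding admissible_def by auto
  ultimately show ?thesis
    by (simp add: compact_Int_closed)
qed

lemma admissible_nonempty:
  fixes U :: "'a::euclidean_space set"
  assumes "subspace U" "\<forall>j<k. u j \<in> U" "k < dim U"
  shows "admissible U u k \<noteq> {}"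
proof -
  have "dim (u ` {..<k}) \<le> k"
    using dim_le_card'[of "u ` {..<k}"] card_image_le[of "{..<k}" u] by simp
  then have "span (u ` {..<k}) \<noteq> span U"
    using assms(3) by (metis dim_span leD)
  moreover have "span (u ` {..<k}) \<subseteq> span U"
    using assms(2) by (intro span_mono) auto
  ultimately obtain x where x: "x \<noteq> 0" "x \<in> span U" "\<And>y. y \<in> span (u ` {..<k}) \<Longrightarrow> orthogonal x y"
    using orthogonal_to_subspace_exists_gen by blast
  have "u j \<bullet> x = 0" if "j < k" for j
    using x(3)[OF span_base, of "u j"] that by (simp add: orthogonal_def inner_commute)
  moreover have "x \<in> U"
    using x(2) assms(1) by (simp add: span_eq_iff[THEN iffD2])
  ultimately have "(1 / norm x) *\<^sub>R x \<in> admissible U u k"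
    using x(1) assms(1) by (simp add: admissible_def subspace_scale)
  then show ?thesis by blast
qed

lemma principal_vectors_exist:
  fixes U V :: "'a::euclidean_space set"
  assumes "subspace U" "subspace V" "p \<le> dim U" "p \<le> dim V"
  shows "\<exists>u v. principal_vectors U V p u v"
  using assms(3,4)
proof (induction p)
  case 0
  show ?case by (simp add: principal_vectors_def)
next
  case (Suc p)
  then obtain u v where uv: "principal_vectors U V p u v" by auto
  let ?S = "admissible U u p \<times> admissible V v p"
  have "\<forall>j<p. u j \<in> U" "\<forall>j<p. v j \<in> V"
    using uv by (auto simp: principal_vectors_def)
  then have "?S \<noteq> {}"
    using admissible_nonempty[of U p u] admissible_nonempty[of V p v] assms(1,2) Suc.prems
    by (simp add: Suc_le_eq)
  moreover have "compact ?S"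
    using assms(1,2) by (intro compact_Times compact_admissible)
  moreover have "continuous_on ?S (\<lambda>z. fst z \<bullet> snd z)"
    by (intro continuous_intros)
  ultimately obtain z where "z \<in> ?S" "\<forall>z'\<in>?S. fst z' \<bullet> snd z' \<le> fst z \<bullet> snd z"
    using continuous_attains_sup by blast
  then have "principal_vectors U V (Suc p) (u(p := fst z)) (v(p := snd z))"
    by (intro principal_vectors_Suc[OF uv]) (auto simp: mem_Times_iff)
  then show ?case by blast
qed

lemma unit_vectors_eq_if_inner_eq_1:
  fixes a b :: "'a::real_inner"
  assumes "norm a = 1" "norm b = 1" "a \<bullet> b = 1"
  shows "a = b"
proof -
  have "(norm (a - b))\<^sup>2 = 0"
    using assms by (simp add: power2_norm_eq_inner inner_diff inner_commute[of b a] norm_eq_1)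
  then show ?thesis by simp
qed

lemma principal_vectors_orthonormal:
  assumes "principal_vectors U V p u v" "i < p" "j < p"
  shows "u i \<bullet> u j = (if i = j then 1 else 0)"
proof -
  have "norm (u i) = 1" "\<forall>l<i. u l \<bullet> u i = 0" "\<forall>l<j. u l \<bullet> u j = 0"
    using assms unfolding principal_vectors_def by auto
  then show ?thesis
    by (cases i j rule: linorder_cases) (auto simp: inner_commute norm_eq_1)
qed

lemma orthonormal_family_independent:
  fixes e :: "nat \<Rightarrow> 'a::real_inner"
  assumes "\<And>i j. i < k \<Longrightarrow> j < k \<Longrightarrow> e i \<bullet> e j = (if i = j then 1 else 0)"
  shows "independent (e ` {..<k})" and "card (e ` {..<k}) = k"
proof -
  have "inj_on e {..<k}"
  proof (rule inj_onI)
    fix i j assume "i \<in> {..<k}" "j \<in> {..<k}" "e i = e j"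
    then show "i = j"
      using assms[of i j] assms[of j j] by (auto split: if_splits)
  qed
  then show "card (e ` {..<k}) = k"
    by (simp add: card_image)
  have "pairwise orthogonal (e ` {..<k})"
    using assms by (auto simp: pairwise_def orthogonal_def)
  moreover have "0 \<notin> e ` {..<k}"
    using assms by (metis image_iff inner_zero_left lessThan_iff zero_neq_one)
  ultimately show "independent (e ` {..<k})"
    by (rule pairwise_orthogonal_independent)
qed

lemma principal_vectors_eq_below_dim_Int:
  fixes U V :: "'a::euclidean_space set"
  assumes "subspace U" "subspace V" "principal_vectors U V p u v"
    and "k < p" "k < dim (U \<inter> V)"
  shows "u k = v k"
  using assms(4,5)
proof (induction k rule: less_induct)
  case (less k)
  note pv = principal_vectorsD[OF assms(3)]
  have prev: "u j = v j" if "j < k" for j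
    using less that by simp
  have "u j \<in> U \<inter> V" if "j < k" for j
    using pv(1,2)[of j] prev[OF that] that less.prems by (simp add: admissible_def)
  then obtain w where w: "w \<in> admissible (U \<inter> V) u k"
    using admissible_nonempty[of "U \<inter> V" k u] assms(1,2) less.prems
    by (auto intro: subspace_inter)
  then have "w \<in> admissible U u k" "w \<in> admissible V v k"
    using prev by (auto simp: admissible_def)
  then have "w \<bullet> w \<le> u k \<bullet> v k"
    using pv(3) less.prems by blast
  moreover have "w \<bullet> w = 1"
    using w by (simp add: admissible_def norm_eq_1)
  moreover have "norm (u k) = 1" "norm (v k) = 1"
    using pv(1,2)[of k] less.prems by (simp_all add: admissible_def)
  moreover have "u k \<bullet> v k \<le> 1"
    using norm_cauchy_schwarz[of "u k" "v k"] calculation(3,4) by simp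
  ultimately show ?case
    using unit_vectors_eq_if_inner_eq_1 by simp
qed

lemma principal_vectors_at_dim_Int:
  fixes U V :: "'a::euclidean_space set"
  assumes "subspace U" "subspace V" "principal_vectors U V p u v"
    and "dim (U \<inter> V) = m" "m < p"
  shows "\<forall>w\<in>U \<inter> V. u m \<bullet> w = 0"
    and "\<And>x y. x \<in> U \<Longrightarrow> y \<in> V \<Longrightarrow> norm x = 1 \<Longrightarrow> norm y = 1 \<Longrightarrow>
           \<forall>w\<in>U \<inter> V. x \<bullet> w = 0 \<and> y \<bullet> w = 0 \<Longrightarrow> x \<bullet> y \<le> u m \<bullet> v m"
proof -
  note pv = principal_vectorsD[OF assms(3)]
  have eq: "v j = u j" if "j < m" for j
    using principal_vectors_eq_below_dim_Int[OF assms(1-3)] that assms(4,5) by simp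
  have in_Int: "u j \<in> U \<inter> V" if "j < m" for j
    using pv(1,2)[of j] eq[OF that] that assms(5) by (simp add: admissible_def)
  then have B: "u ` {..<m} \<subseteq> U \<inter> V"
    by auto
  have orthonormal: "u i \<bullet> u j = (if i = j then 1 else 0)" if "i < m" "j < m" for i j
    using principal_vectors_orthonormal[OF assms(3)] that assms(5) by simp
  have span: "U \<inter> V \<subseteq> span (u ` {..<m})"
    using card_ge_dim_independent[OF B] orthonormal_family_independent[OF orthonormal] assms(4)
    by simp
  have orth: "z \<bullet> w = 0" if "\<forall>j<m. u j \<bullet> z = 0" "w \<in> U \<inter> V" for z w
  proof -
    have "orthogonal z y" if "y \<in> u ` {..<m}" for y
      using that \<open>\<forall>j<m. u j \<bullet> z = 0\<close> by (auto simp: orthogonal_def inner_commute)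
    then have "orthogonal z w"
      using orthogonal_to_span span that(2) by blast
    then show ?thesis
      by (simp add: orthogonal_def)
  qed
  show "\<forall>w\<in>U \<inter> V. u m \<bullet> w = 0"
    using orth pv(1)[OF assms(5)] by (simp add: admissible_def)
  fix x y
  assume xy: "x \<in> U" "y \<in> V" "norm x = 1" "norm y = 1" "\<forall>w\<in>U \<inter> V. x \<bullet> w = 0 \<and> y \<bullet> w = 0"
  have "u j \<bullet> x = 0 \<and> v j \<bullet> y = 0" if "j < m" for j
    using xy(5) in_Int[OF that] eq[OF that] by (metis inner_commute)
  then have "x \<in> admissible U u m" "y \<in> admissible V v m"
    using xy(1-4) by (simp_all add: admissible_def)
  then show "x \<bullet> y \<le> u m \<bullet> v m"
    using pv(3) assms(5) by blast
qed

(* x - (a \<bullet> x / (a \<bullet> a)) *\<^sub>R a is the component of x orthogonal to a; for a = 0 it is x,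
   because a \<bullet> x / 0 = 0, so none of the following lemmas needs a \<noteq> 0. *)
lemma inner_residual_eq_0:
  fixes a x :: "'a::real_inner"
  shows "a \<bullet> (x - (a \<bullet> x / (a \<bullet> a)) *\<^sub>R a) = 0"
  by (cases "a = 0") (simp_all add: inner_diff_right)

lemma inner_self_residual:
  fixes a x :: "'a::real_inner"
  shows "x \<bullet> (x - (a \<bullet> x / (a \<bullet> a)) *\<^sub>R a) = (norm (x - (a \<bullet> x / (a \<bullet> a)) *\<^sub>R a))\<^sup>2"
  using inner_residual_eq_0[of a x] by (simp add: power2_norm_eq_inner inner_diff_left)

lemma norm_residual_sq:
  fixes a x :: "'a::real_inner"
  shows "(norm (x - (a \<bullet> x / (a \<bullet> a)) *\<^sub>R a))\<^sup>2 = x \<bullet> x - (a \<bullet> x)\<^sup>2 / (a \<bullet> a)"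
proof -
  have "(norm (x - (a \<bullet> x / (a \<bullet> a)) *\<^sub>R a))\<^sup>2 = x \<bullet> x - (a \<bullet> x / (a \<bullet> a)) * (x \<bullet> a)"
    by (simp add: inner_self_residual[symmetric] inner_diff_right)
  then show ?thesis
    by (simp add: inner_commute power2_eq_square)
qed

lemma inner_le_norm_residual:
  fixes a x y :: "'a::real_inner"
  assumes "a \<bullet> y = 0"
  shows "x \<bullet> y \<le> norm (x - (a \<bullet> x / (a \<bullet> a)) *\<^sub>R a) * norm y"
proof -
  have "x \<bullet> y = (x - (a \<bullet> x / (a \<bullet> a)) *\<^sub>R a) \<bullet> y"
    using assms by (simp add: inner_diff_left)
  then show ?thesis
    using norm_cauchy_schwarz by simp
qed

lemma normalized_residual:
  fixes a x :: "'a::real_inner"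
  defines "r \<equiv> x - (a \<bullet> x / (a \<bullet> a)) *\<^sub>R a"
  assumes "r \<noteq> 0"
  shows "a \<bullet> (r /\<^sub>R norm r) = 0" "norm (r /\<^sub>R norm r) = 1" "x \<bullet> (r /\<^sub>R norm r) = norm r"
    and "\<And>w. x \<bullet> w = 0 \<Longrightarrow> a \<bullet> w = 0 \<Longrightarrow> (r /\<^sub>R norm r) \<bullet> w = 0"
  using assms by (simp_all add: inner_residual_eq_0 inner_self_residual power2_eq_square inner_diff_left)

lemma residual_in_Int_hyperplane:
  assumes "subspace U" "a \<in> U" "x \<in> U"
  shows "x - (a \<bullet> x / (a \<bullet> a)) *\<^sub>R a \<in> U \<inter> {z. a \<bullet> z = 0}"
  using assms inner_residual_eq_0[of a x] by (simp add: subspace_diff subspace_scale)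

lemma dim_subspace_Int_hyperplane:
  fixes a :: "'a::euclidean_space"
  assumes "subspace U" "a \<in> U" "a \<noteq> 0"
  shows "dim (U \<inter> {z. a \<bullet> z = 0}) = dim U - 1"
proof -
  let ?W = "U \<inter> {z. a \<bullet> z = 0}"
  have "subspace ?W"
    using assms(1) subspace_hyperplane by (rule subspace_inter)
  moreover have "a \<notin> ?W"
    using assms(3) by simp
  ultimately have "span ?W \<subset> span U"
    using assms(1,2) by (metis Int_lower1 span_eq_iff span_mono psubsetI)
  then have lt: "dim ?W < dim U"
    by (metis dim_psubset dim_span)
  have "U \<subseteq> span (insert a ?W)"
  proof
    fix x assume "x \<in> U"
    then have "x - (a \<bullet> x / (a \<bullet> a)) *\<^sub>R a \<in> span (insert a ?W)"
      using residual_in_Int_hyperplane[OF assms(1,2)] by (blast intro: span_base)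
    moreover have "(a \<bullet> x / (a \<bullet> a)) *\<^sub>R a \<in> span (insert a ?W)"
      by (simp add: span_base span_scale)
    ultimately show "x \<in> span (insert a ?W)"
      using span_add by fastforce
  qed
  then have "dim U \<le> dim (insert a ?W)"
    by (metis dim_span dim_subset)
  also have "\<dots> \<le> dim ?W + 1"
    by (simp add: dim_insert)
  finally show ?thesis
    using lt by linarith
qed

lemma orthogonal_to_Int_hyperplane_imp_multiple:
  assumes "subspace U" "a \<in> U" "x \<in> U" "\<forall>w\<in>U \<inter> {z. a \<bullet> z = 0}. x \<bullet> w = 0"
  shows "x = (a \<bullet> x / (a \<bullet> a)) *\<^sub>R a"
proof -
  have "x \<bullet> (x - (a \<bullet> x / (a \<bullet> a)) *\<^sub>R a) = 0"
    using assms residual_in_Int_hyperplane by blast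
  then show ?thesis
    by (simp add: inner_self_residual)
qed

section \<open>Coordinate subspaces and the all-ones vector\<close>

(* In real^'n the unit 1 is the all-ones vector, so {x. 1 \<bullet> x = 0} is the sum-zero hyperplane. *)
definition coordinate_subspace :: "'n::finite set \<Rightarrow> (real^'n) set" where
  "coordinate_subspace T = {x. \<forall>i. i \<notin> T \<longrightarrow> x $ i = 0}"

definition indicator_vec :: "'n::finite set \<Rightarrow> real^'n" where
  "indicator_vec T = (\<chi> i. if i \<in> T then 1 else 0)"

lemma subspace_coordinate_subspace: "subspace (coordinate_subspace T)"
  unfolding subspace_def coordinate_subspace_def by auto

lemma dim_coordinate_subspace: "dim (coordinate_subspace T) = card T"
  using dim_substandard_cart[of T] by (simp add: coordinate_subspace_def dim_vec_eq[symmetric])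

lemma indicator_vec_in_coordinate_subspace: "indicator_vec T \<in> coordinate_subspace T"
  unfolding coordinate_subspace_def indicator_vec_def by simp

lemma inner_indicator_vec:
  "x \<in> coordinate_subspace T \<Longrightarrow> indicator_vec T \<bullet> x = 1 \<bullet> x"
  unfolding coordinate_subspace_def indicator_vec_def inner_vec_def
  by (intro sum.cong) auto

lemma inner_indicator_vec_self: "indicator_vec T \<bullet> indicator_vec T = real (card T)"
  using inner_indicator_vec[OF indicator_vec_in_coordinate_subspace, of T]
  by (simp add: inner_vec_def indicator_vec_def sum.If_cases)

lemma inner_one_self: "(1::real^'n::finite) \<bullet> 1 = real CARD('n)"
  by (simp add: inner_vec_def)

lemma coordinate_subspace_Int_sum_zero:
  "coordinate_subspace T \<inter> {x. 1 \<bullet> x = 0} = coordinate_subspace T \<inter> {x. indicator_vec T \<bullet> x = 0}"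
  by (auto simp: inner_indicator_vec)

lemma dim_coordinate_subspace_Int_sum_zero:
  fixes T :: "'n::finite set"
  assumes "T \<noteq> {}"
  shows "dim (coordinate_subspace T \<inter> {x. 1 \<bullet> x = 0}) = card T - 1"
proof -
  have "indicator_vec T \<noteq> 0"
    using inner_indicator_vec_self[of T] assms by auto
  then show ?thesis
    using dim_subspace_Int_hyperplane[OF subspace_coordinate_subspace
        indicator_vec_in_coordinate_subspace]
    by (simp add: coordinate_subspace_Int_sum_zero dim_coordinate_subspace)
qed

lemma norm_residual_orthogonal_coordinate_subspace_Int_sum_zero:
  fixes T :: "'n::finite set"
  assumes "T \<noteq> {}" "x \<in> coordinate_subspace T" "norm x = 1"
    and "\<forall>w\<in>coordinate_subspace T \<inter> {z. 1 \<bullet> z = 0}. x \<bullet> w = 0"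
  shows "norm (x - (1 \<bullet> x / (1 \<bullet> (1::real^'n))) *\<^sub>R 1) =
           sqrt ((real CARD('n) - real (card T)) / real CARD('n))"
proof -
  let ?e = "indicator_vec T"
  define c where "c = ?e \<bullet> x / (?e \<bullet> ?e)"
  have x: "x = c *\<^sub>R ?e"
    unfolding c_def using assms(2,4)
    by (intro orthogonal_to_Int_hyperplane_imp_multiple[OF subspace_coordinate_subspace
          indicator_vec_in_coordinate_subspace]) (simp_all add: coordinate_subspace_Int_sum_zero)
  have "x \<bullet> x = 1"
    using assms(3) by (simp add: norm_eq_1)
  then have "c\<^sup>2 * real (card T) = 1"
    by (simp add: x inner_indicator_vec_self power2_eq_square)
  moreover have "1 \<bullet> x = c * real (card T)"
    using inner_indicator_vec[OF indicator_vec_in_coordinate_subspace, of T]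
    by (simp add: x inner_indicator_vec_self)
  ultimately have "(1 \<bullet> x)\<^sup>2 / (1 \<bullet> (1::real^'n)) = real (card T) / real CARD('n)"
    by (simp add: inner_one_self power_mult_distrib power2_eq_square)
  then have "(norm (x - (1 \<bullet> x / (1 \<bullet> (1::real^'n))) *\<^sub>R 1))\<^sup>2 =
               (real CARD('n) - real (card T)) / real CARD('n)"
    using assms(3) by (simp add: norm_residual_sq norm_eq_1 diff_divide_distrib)
  then show ?thesis
    by (metis norm_ge_zero real_sqrt_unique)
qed

lemma principal_vectors_coordinate_subspace_sum_zero:
  fixes T :: "'n::finite set"
  assumes "T \<noteq> {}" "T \<noteq> UNIV"
    and pv: "principal_vectors (coordinate_subspace T) {x. 1 \<bullet> x = 0} (card T) u v"
  shows "\<forall>k < card T - 1. u k \<bullet> v k = 1"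
    and "u (card T - 1) \<bullet> v (card T - 1) = sqrt ((real CARD('n) - real (card T)) / real CARD('n))"
proof -
  let ?U = "coordinate_subspace T" and ?V = "{x::real^'n. 1 \<bullet> x = 0}" and ?m = "card T - 1"
  have sub: "subspace ?U" "subspace ?V"
    by (simp_all add: subspace_coordinate_subspace subspace_hyperplane)
  have dim: "dim (?U \<inter> ?V) = ?m"
    using dim_coordinate_subspace_Int_sum_zero[OF assms(1)] .
  have m: "?m < card T"
    using assms(1) by (simp add: card_gt_0_iff)
  note pvD = principal_vectorsD[OF pv]
  show "\<forall>k < ?m. u k \<bullet> v k = 1"
  proof (intro allI impI)
    fix k assume "k < ?m"
    then have "u k = v k" "norm (u k) = 1"
      using principal_vectors_eq_below_dim_Int[OF sub pv] pvD(1)[of k] dim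
      by (simp_all add: admissible_def)
    then show "u k \<bullet> v k = 1"
      by (simp add: norm_eq_1)
  qed
  let ?x = "u ?m"
  let ?r = "?x - (1 \<bullet> ?x / (1 \<bullet> (1::real^'n))) *\<^sub>R 1"
  have x: "?x \<in> ?U" "norm ?x = 1"
    using pvD(1)[OF m] by (simp_all add: admissible_def)
  have perp: "\<forall>w\<in>?U \<inter> ?V. ?x \<bullet> w = 0"
    by (rule principal_vectors_at_dim_Int(1)[OF sub pv dim m])
  have r: "norm ?r = sqrt ((real CARD('n) - real (card T)) / real CARD('n))"
    by (rule norm_residual_orthogonal_coordinate_subspace_Int_sum_zero[OF assms(1) x perp])
  have "card T < CARD('n)"
    using assms(2) by (simp add: psubset_card_mono psubsetI)
  then have "?r \<noteq> 0"
    using r by auto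
  note y = normalized_residual[OF this]
  have "?x \<bullet> v ?m \<le> norm ?r"
    using inner_le_norm_residual[of 1 "v ?m" ?x] pvD(2)[OF m] by (simp add: admissible_def)
  moreover have "norm ?r \<le> ?x \<bullet> v ?m"
  proof -
    have "\<forall>w\<in>?U \<inter> ?V. ?x \<bullet> w = 0 \<and> (?r /\<^sub>R norm ?r) \<bullet> w = 0"
      using perp y(4) by simp
    then have "?x \<bullet> (?r /\<^sub>R norm ?r) \<le> ?x \<bullet> v ?m"
      using principal_vectors_at_dim_Int(2)[OF sub pv dim m x(1) _ x(2) y(2)] y(1) by simp
    then show ?thesis
      using y(3) by simp
  qed
  ultimately show "?x \<bullet> v ?m = sqrt ((real CARD('n) - real (card T)) / real CARD('n))"
    using r by simp
qed

theorem lemma2p4: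
  fixes idx :: "'r::finite \<Rightarrow> 'n::finite"
    and A :: "real^'n^1" and B :: "real^'n^'r"
  assumes "CARD('n) \<ge> 2"
    and "CARD('r) < CARD('n)"
    and "inj idx"
    and "A = (\<chi> i j. 1)"
    and "B = (\<chi> k j. if j = idx k then 1 else 0)"
  shows "(\<exists>u v. principal_vectors (null_space_mat B) (null_space_mat A) (CARD('n) - CARD('r)) u v)
       \<and> (\<forall>u v. principal_vectors (null_space_mat B) (null_space_mat A) (CARD('n) - CARD('r)) u v \<longrightarrow>
            (\<forall>k < CARD('n) - CARD('r) - 1. cos (principal_angle u v k) = 1)
          \<and> cos (principal_angle u v (CARD('n) - CARD('r) - 1)) = sqrt (real CARD('r) / real CARD('n)))"
proof -
  define T where "T = - range idx"
  have card_T: "card T = CARD('n) - CARD('r)"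
    using assms(3) by (simp add: T_def Compl_eq_Diff_UNIV card_Diff_subset card_image)
  have T: "T \<noteq> {}" "T \<noteq> UNIV"
    using card_T assms(2) by (auto simp: T_def)
  have "B *v x = (\<chi> k. x $ idx k)" for x
    unfolding assms(5) by (simp add: matrix_vector_mult_def vec_eq_iff of_bool_def[symmetric])
  then have null_B: "null_space_mat B = coordinate_subspace T"
    by (auto simp: null_space_mat_def coordinate_subspace_def T_def vec_eq_iff)
  have null_A: "null_space_mat A = {x. 1 \<bullet> x = 0}"
    by (simp add: null_space_mat_def assms(4) vec_eq_iff matrix_vector_mult_def inner_vec_def)
  have "card T \<le> dim {x::real^'n. 1 \<bullet> x = 0}"
    using card_T finite_UNIV_card_ge_0[where 'a='r] by (simp add: dim_hyperplane diff_le_mono2)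
  then have "\<exists>u v. principal_vectors (coordinate_subspace T) {x. 1 \<bullet> x = 0} (card T) u v"
    by (intro principal_vectors_exist subspace_coordinate_subspace subspace_hyperplane)
      (simp_all add: dim_coordinate_subspace)
  moreover have "real CARD('n) - real (card T) = real CARD('r)"
    using card_T assms(2) by simp
  moreover have "sqrt (real CARD('r) / real CARD('n)) \<le> 1"
    using assms(2) by simp
  ultimately show ?thesis
    unfolding null_A null_B card_T[symmetric] principal_angle_def
    using principal_vectors_coordinate_subspace_sum_zero[OF T]
    by (simp add: cos_arccos_abs)
qed

end
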